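(* Let $V$ be a reflexive Banach space, $X$ a Banach space, $\gamma\in\mathcal{L}(V,X)$ with $c_\gamma:=\|\gamma\|_{\mathcal{L}(V,X)}$ and adjoint $\gamma^*\colon X^*\to V^*$. Let $A\colon V\to V^*$, $J\colon X\times X\to\mathbb{R}$ and $f\in V^*$ satisfy: (A1) $A$ is linear and bounded; (A2) $\langle Au,v\rangle_{V^*\times V}=\langle Av,u\rangle_{V^*\times V}$ for all $u,v\in V$; (A3) there is $m_A>0$ with $\langle Au,u\rangle_{V^*\times V}\ge m_A\|u\|_V^2$ for all $u\in V$; (J1) $J$ is locally Lipschitz continuous with respect to its second variable; (J2) there exist $c_0,c_1,c_2\ge 0$ with $\|\partial_2 J(w,v)\|_{X^*}\le c_0+c_1\|v\|_X+c_2\|w\|_X$ for all $w,v\in X$; (J3) there exist $m_\alpha,m_L\ge0$ such that $J_2^0(w_1,v_1;v_2-v_1)+J_2^0(w_2,v_2;v_1-v_2)\le m_\alpha\|v_1-v_2\|_X^2+m_L\|w_1-w_2\|_X\|v_1-v_2\|_X$ for all $w_1,w_2,v_1,v_2\in X$; (S) $m_A>(m_\alpha+m_L)c_\gamma^2$. Let $\mathcal{L}(w,v)=\tfrac12\langle Av,v\rangle_{V^*\times V}-\langle f,v\rangle_{V^*\times V}+J(\gamma w,\gamma v)$ for $w,v\in V$. Consider Problem (I): find $u\in V$ with $Au+\gamma^*\partial_2J(\gamma u,\gamma u)\ni f$; and Problem (O): find $u\in V$ with $0\in\partial_2\mathcal{L}(u,u)$. Then Problems (I) and (O) are equivalent (have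 the same solutions), they have a unique solution $u\in V$, and this solution satisfies $\|u\|_V\le c\,(1+\|f\|_{V^*})$ with a positive constant $c$.
   Context: For a locally Lipschitz function $g$ on a Banach space $Y$, the generalized (Clarke) directional derivative at $x$ in direction $v$ is $g^0(x;v)=\limsup_{y\to x,\lambda\searrow0}\frac{g(y+\lambda v)-g(y)}{\lambda}$, and the Clarke subdifferential is $\partial g(x)=\{\xi\in Y^*:\langle\xi,v\rangle\le g^0(x;v)\ \forall v\in Y\}$. For a function of two variables, $\partial_2$ and $(\cdot)_2^0$ denote the Clarke subdifferential and generalized directional derivative with respect to the second variable. $\|\partial_2J(w,v)\|_{X^*}$ denotes $\sup\{\|\xi\|_{X^*}:\xi\in\partial_2J(w,v)\}$. *)

theory Defs
  imports "HOL-Analysis.Analysis"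
begin

definition reflexive_space :: "'v::real_normed_vector itself \<Rightarrow> bool" where
  "reflexive_space _ \<longleftrightarrow>
     (\<forall>\<phi> :: ('v \<Rightarrow>\<^sub>L real) \<Rightarrow>\<^sub>L real. \<exists>v::'v. \<forall>\<xi>::'v \<Rightarrow>\<^sub>L real. blinfun_apply \<phi> \<xi> = blinfun_apply \<xi> v)"

definition loc_lipschitz :: "('a::real_normed_vector \<Rightarrow> real) \<Rightarrow> bool" where
  "loc_lipschitz g \<longleftrightarrow> (\<forall>x. \<exists>r>0. \<exists>L. L-lipschitz_on (ball x r) g)"

definition clarke_dd :: "('a::real_normed_vector \<Rightarrow> real) \<Rightarrow> 'a \<Rightarrow> 'a \<Rightarrow> ereal" where
  "clarke_dd g x v =
     Limsup (nhds x \<times>\<^sub>F at_right 0) (\<lambda>(y, t). ereal ((g (y + t *\<^sub>R v) - g y) / t))"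

definition clarke_subdiff :: "('a::real_normed_vector \<Rightarrow> real) \<Rightarrow> 'a \<Rightarrow> ('a \<Rightarrow>\<^sub>L real) set" where
  "clarke_subdiff g x = {\<xi>. \<forall>v. ereal (blinfun_apply \<xi> v) \<le> clarke_dd g x v}"

definition lagr ::
  "('v::real_normed_vector \<Rightarrow> ('v \<Rightarrow>\<^sub>L real)) \<Rightarrow> ('v \<Rightarrow>\<^sub>L real) \<Rightarrow>
   ('x::real_normed_vector \<Rightarrow> 'x \<Rightarrow> real) \<Rightarrow> ('v \<Rightarrow>\<^sub>L 'x) \<Rightarrow> 'v \<Rightarrow> 'v \<Rightarrow> real" where
  "lagr A f J \<gamma> w v = (1/2) * blinfun_apply (A v) v - blinfun_apply f v + J (blinfun_apply \<gamma> w) (blinfun_apply \<gamma> v)"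

definition problem_I ::
  "('v::real_normed_vector \<Rightarrow> ('v \<Rightarrow>\<^sub>L real)) \<Rightarrow> ('v \<Rightarrow>\<^sub>L real) \<Rightarrow>
   ('x::real_normed_vector \<Rightarrow> 'x \<Rightarrow> real) \<Rightarrow> ('v \<Rightarrow>\<^sub>L 'x) \<Rightarrow> 'v \<Rightarrow> bool" where
  "problem_I A f J \<gamma> u \<longleftrightarrow>
     (\<exists>\<xi> \<in> clarke_subdiff (J (blinfun_apply \<gamma> u)) (blinfun_apply \<gamma> u). A u + (\<xi> o\<^sub>L \<gamma>) = f)"

definition problem_O ::
  "('v::real_normed_vector \<Rightarrow> ('v \<Rightarrow>\<^sub>L real)) \<Rightarrow> ('v \<Rightarrow>\<^sub>L real) \<Rightarrow>
   ('x::real_normed_vector \<Rightarrow> 'x \<Rightarrow> real) \<Rightarrow> ('v \<Rightarrow>\<^sub>L 'x) \<Rightarrow> 'v \<Rightarrow> bool" where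
  "problem_O A f J \<gamma> u \<longleftrightarrow> 0 \<in> clarke_subdiff (lagr A f J \<gamma> u) u"

end

theory Submission
  imports Defs
begin

text \<open>
  For fixed \<open>w\<close>, assumptions (A3) and the relaxed monotonicity (J3) of \<open>\<partial>\<^sub>2J\<close> make
  \<open>L(w, \<cdot>)\<close> uniformly midpoint convex with modulus \<open>(m\<^sub>A - m\<^sub>\<alpha> c\<^sub>\<gamma>\<^sup>2)/8\<close>, and
  it is bounded below; hence minimising sequences are Cauchy and \<open>L(w, \<cdot>)\<close> has a minimiser
  \<open>u\<^sub>w\<close>, at which \<open>0 \<in> \<partial>\<^sub>2L(w, u\<^sub>w)\<close>. This inclusion yields the hemivariational inequality
  \<open>\<langle>f - A u\<^sub>w, v\<rangle> \<le> J\<^sub>2\<^sup>0(\<gamma> w, \<gamma> u\<^sub>w; \<gamma> v)\<close>; testing the inequalities for \<open>u\<^sub>w\<^sub>1\<close> and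
  \<open>u\<^sub>w\<^sub>2\<close> against each other and using (J3) shows that \<open>w \<mapsto> u\<^sub>w\<close> is a contraction, and its
  fixed point solves (O). By the Hahn-Banach theorem the hemivariational inequality with
  \<open>w = u\<close> is equivalent to (I); the same testing argument together with (S) gives
  uniqueness, and testing against \<open>v = -u\<close> and comparing with \<open>J(0, \<cdot>)\<close> at \<open>0\<close> gives the bound.
\<close>

section \<open>The Clarke directional derivative\<close>

definition clarke_quot :: "('a::real_normed_vector \<Rightarrow> real) \<Rightarrow> 'a \<Rightarrow> 'a \<times> real \<Rightarrow> real" where
  "clarke_quot g v p = (g (fst p + snd p *\<^sub>R v) - g (fst p)) / snd p"

abbreviation clarke_filter :: "'a::real_normed_vector \<Rightarrow> ('a \<times> real) filter" where
  "clarke_filter x \<equiv> nhds x \<times>\<^sub>F at_right 0"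

lemma clarke_dd_eq_Limsup:
  "clarke_dd g x v = Limsup (clarke_filter x) (\<lambda>p. ereal (clarke_quot g v p))"
  unfolding clarke_dd_def clarke_quot_def by (simp add: case_prod_unfold)

lemma clarke_filter_ne_bot: "clarke_filter x \<noteq> bot"
  by (simp add: prod_filter_eq_bot)

lemma eventually_clarke_filter_pos: "eventually (\<lambda>p. snd p > 0) (clarke_filter x)"
  unfolding eventually_prod_filter
  by (rule exI[of _ "\<lambda>_. True"], rule exI[of _ "\<lambda>t. t > 0"]) (auto simp: eventually_at_right_less)

lemma eventually_clarke_filterE:
  assumes "eventually P (clarke_filter x)"
  obtains Q \<delta> where "eventually Q (nhds x)" "Q x" "\<delta> > 0"
    "\<And>y t. Q y \<Longrightarrow> 0 < t \<Longrightarrow> t < \<delta> \<Longrightarrow> P (y, t)"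
proof -
  obtain Q R where QR: "eventually Q (nhds x)" "eventually R (at_right 0)"
    "\<And>y t. Q y \<Longrightarrow> R t \<Longrightarrow> P (y, t)"
    using assms unfolding eventually_prod_filter by blast
  obtain \<delta> where "\<delta> > 0" "\<And>t. 0 < t \<Longrightarrow> t < \<delta> \<Longrightarrow> R t"
    using QR(2) unfolding eventually_at_right_field by auto
  with QR that show ?thesis using eventually_nhds_x_imp_x by blast
qed

lemma eventually_at_right_mult_less:
  assumes "r > 0"
  shows "eventually (\<lambda>t. 0 < t \<and> t * c < r) (at_right (0::real))"
  unfolding eventually_at_right_field
proof (intro exI conjI allI impI)
  show "0 < r / (\<bar>c\<bar> + 1)" using assms by auto
  fix t :: real assume t: "0 < t" "t < r / (\<bar>c\<bar> + 1)"
  then show "0 < t" by simp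
  have "t * c \<le> t * (\<bar>c\<bar> + 1)" using t by (intro mult_left_mono) auto
  also have "\<dots> < r" using t by (simp add: field_simps)
  finally show "t * c < r" .
qed

lemma loc_lipschitzE:
  assumes "loc_lipschitz g"
  obtains r L where "r > 0" "L \<ge> 0" "L-lipschitz_on (ball x r) g"
  using assms unfolding loc_lipschitz_def lipschitz_on_def by blast

lemma loc_lipschitz_isCont: "loc_lipschitz g \<Longrightarrow> isCont g x"
  by (metis centre_in_ball continuous_on_interior interior_ball loc_lipschitzE lipschitz_on_continuous_on)

lemma eventually_abs_clarke_quot_le:
  assumes "r > 0" "L-lipschitz_on (ball x r) g"
  shows "eventually (\<lambda>p. \<bar>clarke_quot g v p\<bar> \<le> L * norm v) (clarke_filter x)"
  unfolding eventually_prod_filter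
proof (intro exI conjI allI impI)
  show "eventually (\<lambda>y. y \<in> ball x (r/2)) (nhds x)"
    by (rule eventually_nhds_in_open) (use assms in auto)
  show "eventually (\<lambda>t. 0 < t \<and> t * norm v < r/2) (at_right 0)"
    by (rule eventually_at_right_mult_less) (use assms in auto)
  fix y t assume y: "y \<in> ball x (r/2)" and t: "0 < t \<and> t * norm v < r/2"
  have "dist x (y + t *\<^sub>R v) \<le> dist x y + t * norm v"
    using dist_triangle[of x "y + t *\<^sub>R v" y] t by (simp add: dist_norm)
  then have yt: "y + t *\<^sub>R v \<in> ball x r" using y t by simp
  have yb: "y \<in> ball x r" using y assms(1) by simp
  have "\<bar>g (y + t *\<^sub>R v) - g y\<bar> \<le> L * dist (y + t *\<^sub>R v) y"
    using lipschitz_onD[OF assms(2) yt yb] by (simp add: dist_real_def)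
  also have "dist (y + t *\<^sub>R v) y = t * norm v" using t by (simp add: dist_norm)
  finally show "\<bar>clarke_quot g v (y, t)\<bar> \<le> L * norm v"
    using t by (simp add: clarke_quot_def abs_divide divide_le_eq mult.commute mult.left_commute)
qed

lemma clarke_dd_bounds:
  assumes "loc_lipschitz g"
  obtains K where "K \<ge> 0" "\<And>v. clarke_dd g x v \<le> ereal (K * norm v)"
    "\<And>v. ereal (- (K * norm v)) \<le> clarke_dd g x v"
proof -
  obtain r L where rL: "r > 0" "L \<ge> 0" "L-lipschitz_on (ball x r) g"
    using loc_lipschitzE[OF assms] by blast
  note ev = eventually_abs_clarke_quot_le[OF rL(1,3)]
  show ?thesis
  proof (rule that[OF rL(2)])
    fix v
    show "clarke_dd g x v \<le> ereal (L * norm v)"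
      unfolding clarke_dd_eq_Limsup
      by (rule Limsup_bounded) (use ev[of v] in \<open>eventually_elim, auto\<close>)
    show "ereal (- (L * norm v)) \<le> clarke_dd g x v"
      unfolding clarke_dd_eq_Limsup
      by (rule le_Limsup[OF clarke_filter_ne_bot]) (use ev[of v] in \<open>eventually_elim, auto\<close>)
  qed
qed

text \<open>For locally Lipschitz functions the Clarke derivative is finite, so it may be handled
  as a real number.\<close>

definition clarke_der :: "('a::real_normed_vector \<Rightarrow> real) \<Rightarrow> 'a \<Rightarrow> 'a \<Rightarrow> real" where
  "clarke_der g x v = real_of_ereal (clarke_dd g x v)"

lemma clarke_dd_eq_ereal:
  assumes "loc_lipschitz g"
  shows "clarke_dd g x v = ereal (clarke_der g x v)"
proof -
  obtain K where K: "\<And>v. clarke_dd g x v \<le> ereal (K * norm v)"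
    "\<And>v. ereal (- (K * norm v)) \<le> clarke_dd g x v"
    using clarke_dd_bounds[OF assms] by blast
  have "\<bar>clarke_dd g x v\<bar> \<noteq> \<infinity>" using K(1)[of v] K(2)[of v] by auto
  then show ?thesis unfolding clarke_der_def by (simp add: ereal_real')
qed

lemma clarke_der_abs_le:
  assumes "loc_lipschitz g"
  obtains K where "K \<ge> 0" "\<And>v. \<bar>clarke_der g x v\<bar> \<le> K * norm v"
proof -
  obtain K where "K \<ge> 0" "\<And>v. clarke_dd g x v \<le> ereal (K * norm v)"
    "\<And>v. ereal (- (K * norm v)) \<le> clarke_dd g x v"
    using clarke_dd_bounds[OF assms] by blast
  then show ?thesis
    using that[of K] by (simp add: clarke_dd_eq_ereal[OF assms] abs_le_iff minus_le_iff)
qed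

lemma clarke_dd_lessD:
  "clarke_dd g x v < ereal M \<Longrightarrow> eventually (\<lambda>p. clarke_quot g v p < M) (clarke_filter x)"
  unfolding clarke_dd_eq_Limsup using Limsup_lessD by fastforce

lemma eventually_clarke_quot_less:
  assumes "loc_lipschitz g" "e > 0"
  shows "eventually (\<lambda>p. clarke_quot g v p < clarke_der g x v + e) (clarke_filter x)"
  by (rule clarke_dd_lessD) (use clarke_dd_eq_ereal[OF assms(1)] assms(2) in simp)

lemma clarke_dd_le_ereal:
  assumes "\<And>e. e > 0 \<Longrightarrow> eventually (\<lambda>p. clarke_quot g v p < M + e) (clarke_filter x)"
  shows "clarke_dd g x v \<le> ereal M"
proof (rule ereal_le_epsilon2)
  fix e :: real assume "0 < e"
  have "clarke_dd g x v \<le> ereal (M + e)"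
    unfolding clarke_dd_eq_Limsup
    by (rule Limsup_bounded) (use assms[OF \<open>0 < e\<close>] in \<open>eventually_elim, auto\<close>)
  then show "clarke_dd g x v \<le> ereal M + ereal e" by simp
qed

lemma clarke_der_add_le:
  assumes g: "loc_lipschitz g"
  shows "clarke_der g x (v + w) \<le> clarke_der g x v + clarke_der g x w"
proof -
  have "clarke_dd g x (v + w) \<le> ereal (clarke_der g x v + clarke_der g x w)"
  proof (rule clarke_dd_le_ereal)
    fix e :: real assume "e > 0"
    then have e: "e/2 > 0" by simp
    have "((\<lambda>p. fst p + snd p *\<^sub>R v) \<longlongrightarrow> x + 0 *\<^sub>R v) (clarke_filter x)"
      by (intro tendsto_intros filterlim_fst filterlim_mono[OF filterlim_snd at_within_le_nhds order_refl])
    then have "filterlim (\<lambda>p. (fst p + snd p *\<^sub>R v, snd p)) (clarke_filter x) (clarke_filter x)"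
      by (intro filterlim_Pair filterlim_snd) simp
    from filterlim_iff[THEN iffD1, OF this, rule_format,
        OF eventually_clarke_quot_less[OF g e, of w x]]
    have "eventually (\<lambda>p. clarke_quot g w (fst p + snd p *\<^sub>R v, snd p) < clarke_der g x w + e/2)
        (clarke_filter x)"
      by simp
    with eventually_clarke_quot_less[OF g e, of v x] eventually_clarke_filter_pos
    show "eventually (\<lambda>p. clarke_quot g (v + w) p < clarke_der g x v + clarke_der g x w + e)
        (clarke_filter x)"
    proof eventually_elim
      case (elim p)
      \<comment> \<open>The increment in direction \<open>v + w\<close> splits at the intermediate point \<open>y + t v\<close>.\<close>
      then have "clarke_quot g (v + w) p = clarke_quot g w (fst p + snd p *\<^sub>R v, snd p) + clarke_quot g v p"
        by (simp add: clarke_quot_def diff_divide_distrib scaleR_add_right add.assoc)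
      with elim show ?case by simp
    qed
  qed
  then show ?thesis by (simp add: clarke_dd_eq_ereal[OF g])
qed

lemma clarke_der_scaleR_le:
  assumes g: "loc_lipschitz g" and a: "a > 0"
  shows "clarke_der g x (a *\<^sub>R v) \<le> a * clarke_der g x v"
proof -
  have "clarke_dd g x (a *\<^sub>R v) \<le> ereal (a * clarke_der g x v)"
  proof (rule clarke_dd_le_ereal)
    fix e :: real assume e: "e > 0"
    obtain P \<delta> where P: "eventually P (nhds x)" "\<delta> > 0"
      "\<And>y t. P y \<Longrightarrow> 0 < t \<Longrightarrow> t < \<delta> \<Longrightarrow> clarke_quot g v (y, t) < clarke_der g x v + e/a"
      using eventually_clarke_quot_less[OF g, of "e/a" v x] e a
      by (auto elim: eventually_clarke_filterE)
    show "eventually (\<lambda>p. clarke_quot g (a *\<^sub>R v) p < a * clarke_der g x v + e) (clarke_filter x)"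
      unfolding eventually_prod_filter
    proof (intro exI conjI allI impI, fact P(1), rule eventually_at_right_mult_less[OF P(2)])
      fix y t assume y: "P y" and t: "0 < t \<and> t * a < \<delta>"
      have "clarke_quot g (a *\<^sub>R v) (y, t) = a * clarke_quot g v (y, t * a)"
        using t a by (simp add: clarke_quot_def field_simps)
      also have "\<dots> < a * (clarke_der g x v + e/a)"
        using P(3)[OF y, of "t * a"] t a by simp
      also have "\<dots> = a * clarke_der g x v + e"
        using a by (simp add: distrib_left)
      finally show "clarke_quot g (a *\<^sub>R v) (y, t) < a * clarke_der g x v + e" .
    qed
  qed
  then show ?thesis by (simp add: clarke_dd_eq_ereal[OF g])
qed

lemma clarke_der_zero_dir: "clarke_der g x 0 = 0"
proof -
  have "clarke_dd g x 0 = Limsup (clarke_filter x) (\<lambda>p. 0)"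
    unfolding clarke_dd_eq_Limsup by (simp add: clarke_quot_def zero_ereal_def)
  then show ?thesis by (simp add: clarke_der_def Limsup_const[OF clarke_filter_ne_bot])
qed

lemma clarke_der_scaleR:
  assumes g: "loc_lipschitz g" and a: "a \<ge> 0"
  shows "clarke_der g x (a *\<^sub>R v) = a * clarke_der g x v"
proof (cases "a = 0")
  case True then show ?thesis by (simp add: clarke_der_zero_dir)
next
  case False
  with a have a: "a > 0" by simp
  have "clarke_der g x v = clarke_der g x (inverse a *\<^sub>R (a *\<^sub>R v))" using a by simp
  also have "\<dots> \<le> inverse a * clarke_der g x (a *\<^sub>R v)"
    by (rule clarke_der_scaleR_le[OF g]) (use a in simp)
  finally have "a * clarke_der g x v \<le> clarke_der g x (a *\<^sub>R v)"
    using a by (simp add: field_simps)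
  with clarke_der_scaleR_le[OF g a, of x v] show ?thesis by linarith
qed

lemma clarke_dd_nonneg_at_min:
  assumes min: "\<And>y. g x \<le> g y"
  shows "0 \<le> clarke_dd g x v"
proof (rule ccontr)
  assume "\<not> 0 \<le> clarke_dd g x v"
  then have "clarke_dd g x v < ereal 0" by (simp add: zero_ereal_def)
  from clarke_dd_lessD[OF this] obtain Q \<delta> where "eventually Q (nhds x)" "Q x" "\<delta> > 0"
    "\<And>y t. Q y \<Longrightarrow> 0 < t \<Longrightarrow> t < \<delta> \<Longrightarrow> clarke_quot g v (y, t) < 0"
    by (rule eventually_clarke_filterE) blast
  then have "clarke_quot g v (x, \<delta>/2) < 0" by simp
  moreover have "0 \<le> clarke_quot g v (x, \<delta>/2)"
    using min[of "x + (\<delta>/2) *\<^sub>R v"] \<open>\<delta> > 0\<close> by (simp add: clarke_quot_def)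
  ultimately show False by simp
qed

lemma zero_in_clarke_subdiff_at_min:
  assumes "\<And>y. g x \<le> g y"
  shows "0 \<in> clarke_subdiff g x"
  using clarke_dd_nonneg_at_min[of g x, OF assms] by (simp add: clarke_subdiff_def zero_ereal_def[symmetric])

lemma clarke_dd_comp_blinfun_le:
  fixes T :: "'a::real_normed_vector \<Rightarrow>\<^sub>L 'b::real_normed_vector"
  shows "clarke_dd (\<lambda>z. g (T z)) x v \<le> clarke_dd g (T x) (T v)"
proof -
  have lim: "filterlim (\<lambda>p. (T (fst p), snd p)) (clarke_filter (T x)) (clarke_filter x)"
    by (intro filterlim_Pair bounded_linear.tendsto[OF blinfun.bounded_linear_right]
        filterlim_fst filterlim_snd)
  have eq: "clarke_quot (\<lambda>z. g (T z)) v p = clarke_quot g (T v) (T (fst p), snd p)" for p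
    by (simp add: clarke_quot_def blinfun.bilinear_simps)
  show ?thesis
    unfolding clarke_dd_eq_Limsup
  proof (rule Limsup_le_iff[THEN iffD2], intro allI impI)
    fix y assume "y > Limsup (clarke_filter (T x)) (\<lambda>p. ereal (clarke_quot g (T v) p))"
    from filterlim_iff[THEN iffD1, OF lim, rule_format, OF Limsup_lessD[OF this]]
    show "eventually (\<lambda>p. y > ereal (clarke_quot (\<lambda>z. g (T z)) v p)) (clarke_filter x)"
      by (simp add: eq)
  qed
qed

lemma clarke_dd_add_smooth:
  assumes h: "loc_lipschitz h"
    and eq: "eventually (\<lambda>p. clarke_quot g v p = clarke_quot h v p + r p) (clarke_filter x)"
    and r: "(r \<longlongrightarrow> \<rho>) (clarke_filter x)"
  shows "clarke_dd g x v = clarke_dd h x v + ereal \<rho>"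
proof -
  have shift: "Limsup (clarke_filter x) (\<lambda>p. ereal (clarke_quot h v p) + ereal c)
      = clarke_dd h x v + ereal c" for c
    unfolding clarke_dd_eq_Limsup by (rule Limsup_add_ereal_right[OF clarke_filter_ne_bot]) simp
  have up: "clarke_dd g x v \<le> clarke_dd h x v + ereal (\<rho> + e)" if "e > 0" for e
  proof -
    have "eventually (\<lambda>p. r p < \<rho> + e) (clarke_filter x)"
      using order_tendstoD(2)[OF r] that by simp
    with eq have "eventually (\<lambda>p. ereal (clarke_quot g v p)
        \<le> ereal (clarke_quot h v p) + ereal (\<rho> + e)) (clarke_filter x)"
      by eventually_elim auto
    then show ?thesis
      unfolding shift[symmetric] clarke_dd_eq_Limsup[of g] by (rule Limsup_mono)
  qed
  have low: "clarke_dd h x v + ereal (\<rho> - e) \<le> clarke_dd g x v" if "e > 0" for e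
  proof -
    have "eventually (\<lambda>p. \<rho> - e < r p) (clarke_filter x)"
      using order_tendstoD(1)[OF r] that by simp
    with eq have "eventually (\<lambda>p. ereal (clarke_quot h v p) + ereal (\<rho> - e)
        \<le> ereal (clarke_quot g v p)) (clarke_filter x)"
      by eventually_elim auto
    then show ?thesis
      unfolding shift[symmetric] clarke_dd_eq_Limsup[of g] by (rule Limsup_mono)
  qed
  obtain c where c: "clarke_dd h x v = ereal c" using clarke_dd_eq_ereal[OF h] by blast
  from up[of 1] low[of 1] obtain l where l: "clarke_dd g x v = ereal l"
    unfolding c by (cases "clarke_dd g x v") auto
  have "l \<le> c + \<rho>"
    by (rule field_le_epsilon) (use up l c in \<open>auto simp: add.assoc\<close>)
  moreover have "c + \<rho> \<le> l"
    by (rule field_le_epsilon) (use low l c in \<open>force simp: algebra_simps\<close>)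
  ultimately show ?thesis using l c by simp
qed

lemma eventually_right_increment_less:
  assumes g: "loc_lipschitz g" and e: "e > 0"
  shows "eventually (\<lambda>s. g (z + s *\<^sub>R d) - g z < s * (clarke_der g z d + e)) (at_right 0)"
proof -
  obtain Q \<delta> where "eventually Q (nhds z)" "Q z" "\<delta> > 0"
    "\<And>y t. Q y \<Longrightarrow> 0 < t \<Longrightarrow> t < \<delta> \<Longrightarrow> clarke_quot g d (y, t) < clarke_der g z d + e"
    using eventually_clarke_quot_less[OF g e, of d z] by (rule eventually_clarke_filterE) blast
  then show ?thesis
    unfolding eventually_at_right_field
    by (intro exI[of _ \<delta>]) (auto simp: clarke_quot_def pos_divide_less_eq mult.commute)
qed

section \<open>Relaxed monotone functions\<close>

lemma dini_nonincreasing: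
  fixes F :: "real \<Rightarrow> real"
  assumes c: "c \<ge> 0" and cont: "continuous_on {0..c} F"
    and dini: "\<And>t e. 0 \<le> t \<Longrightarrow> t < c \<Longrightarrow> e > 0 \<Longrightarrow>
      eventually (\<lambda>s. F (t + s) - F t \<le> e * s) (at_right 0)"
  shows "F c \<le> F 0"
proof -
  have slope: "F c - F 0 \<le> e * c" if e: "e > 0" for e
  proof -
    define S where "S = {t \<in> {0..c}. F t \<le> e * t + F 0}"
    have "closed S"
      unfolding S_def by (rule continuous_on_closed_Collect_le[OF cont]) (auto intro!: continuous_intros)
    moreover have "0 \<in> S" "bdd_above S" using c by (auto simp: S_def intro: bdd_aboveI[of _ c])
    ultimately have sup: "Sup S \<in> S" by (intro closed_contains_Sup) auto
    have "Sup S = c"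
    proof (rule ccontr)
      assume "Sup S \<noteq> c"
      with sup have \<sigma>: "0 \<le> Sup S" "Sup S < c" "F (Sup S) \<le> e * Sup S + F 0" by (auto simp: S_def)
      obtain \<delta> where \<delta>: "\<delta> > 0" "\<And>s. 0 < s \<and> s < \<delta> \<Longrightarrow> F (Sup S + s) - F (Sup S) \<le> e * s"
        using dini[OF \<sigma>(1,2) e] unfolding eventually_at_right_field by auto
      define s where "s = min \<delta> (c - Sup S) / 2"
      have s: "0 < s" "s < \<delta>" "Sup S + s \<le> c" using \<delta> \<sigma> by (auto simp: s_def min_def field_simps)
      then have "Sup S + s \<in> S"
        using \<delta>(2)[of s] \<sigma> by (auto simp: S_def algebra_simps)
      then have "Sup S + s \<le> Sup S" by (rule cSup_upper[OF _ \<open>bdd_above S\<close>])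
      with s show False by simp
    qed
    with sup show ?thesis by (simp add: S_def)
  qed
  show ?thesis
  proof (rule field_le_epsilon)
    fix e :: real assume "e > 0"
    then have "F c - F 0 \<le> e / (c + 1) * c" using c by (intro slope) simp
    also have "\<dots> \<le> e" using \<open>e > 0\<close> c by (simp add: field_simps)
    finally show "F c \<le> F 0 + e" by simp
  qed
qed

definition relaxed_monotone :: "real \<Rightarrow> ('a::real_normed_vector \<Rightarrow> real) \<Rightarrow> bool" where
  "relaxed_monotone m g \<longleftrightarrow>
     (\<forall>x y. clarke_dd g x (y - x) + clarke_dd g y (x - y) \<le> ereal (m * (norm (x - y))\<^sup>2))"

lemma relaxed_monotone_clarke_der:
  assumes "loc_lipschitz g" "relaxed_monotone m g"
  shows "clarke_der g x (y - x) + clarke_der g y (x - y) \<le> m * (norm (x - y))\<^sup>2"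
  using assms(2) unfolding relaxed_monotone_def by (simp add: clarke_dd_eq_ereal[OF assms(1)])

lemma loc_lipschitz_continuous_on_path:
  "loc_lipschitz g \<Longrightarrow> continuous_on S p \<Longrightarrow> continuous_on S (\<lambda>t. g (p t))"
  by (rule continuous_on_compose2[of UNIV g]) (auto intro: continuous_at_imp_continuous_on loc_lipschitz_isCont)

lemma relaxed_monotone_clarke_der_segment:
  assumes g: "loc_lipschitz g" "relaxed_monotone m g" and l: "l > 0" and xy: "y - x = l *\<^sub>R d"
  shows "clarke_der g x d + clarke_der g y (- d) \<le> m * l * (norm d)\<^sup>2"
proof -
  have yx: "x - y = l *\<^sub>R (- d)" using xy by (metis minus_diff_eq scaleR_minus_right)
  have "l * clarke_der g x d + l * clarke_der g y (- d) \<le> m * (l * norm d)\<^sup>2"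
    using relaxed_monotone_clarke_der[OF g, of x y] l
      clarke_der_scaleR[OF g(1) less_imp_le[OF l], of x d]
      clarke_der_scaleR[OF g(1) less_imp_le[OF l], of y "- d"]
    unfolding xy yx by simp
  then have "l * (clarke_der g x d + clarke_der g y (- d)) \<le> l * (m * l * (norm d)\<^sup>2)"
    by (simp add: power2_eq_square algebra_simps)
  with l show ?thesis by simp
qed

lemma relaxed_monotone_midpoint:
  assumes g: "loc_lipschitz g" "relaxed_monotone m g" and m: "m \<ge> 0"
  shows "2 * g ((1/2) *\<^sub>R (x + y)) \<le> g x + g y + m * (norm (x - y))\<^sup>2 / 4"
proof -
  define d where "d = y - x"
  define N where "N = (norm d)\<^sup>2"
  \<comment> \<open>Move both end points towards the midpoint; relaxed monotonicity bounds the sum of the two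
    one-sided derivatives, so \<open>F\<close> is nonincreasing.\<close>
  define F where "F t = g (x + t *\<^sub>R d) + g (x + (1 - t) *\<^sub>R d) - m * N * (t - t\<^sup>2)" for t
  have "F (1/2) \<le> F 0"
  proof (rule dini_nonincreasing)
    show "continuous_on {0..1/2} F"
      unfolding F_def by (intro loc_lipschitz_continuous_on_path[OF g(1)] continuous_intros)
    fix t e :: real assume t: "0 \<le> t" "t < 1/2" and e: "e > 0"
    define z1 where "z1 = x + t *\<^sub>R d"
    define z2 where "z2 = x + (1 - t) *\<^sub>R d"
    define l where "l = 1 - 2 * t"
    have l: "l > 0" using t by (simp add: l_def)
    have "z2 - z1 = (1 - t) *\<^sub>R d - t *\<^sub>R d" by (simp add: z1_def z2_def)
    also have "\<dots> = l *\<^sub>R d" by (simp add: l_def flip: scaleR_diff_left)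
    finally have der: "clarke_der g z1 d + clarke_der g z2 (- d) \<le> m * l * N"
      unfolding N_def by (rule relaxed_monotone_clarke_der_segment[OF g l])
    have "e/4 > 0" "e/2 > 0" using e by simp_all
    show "eventually (\<lambda>s. F (t + s) - F t \<le> e * s) (at_right 0)"
      using eventually_right_increment_less[OF g(1) \<open>e/4 > 0\<close>, of z1 d]
        eventually_right_increment_less[OF g(1) \<open>e/4 > 0\<close>, of z2 "- d"]
        eventually_at_right_mult_less[OF \<open>e/2 > 0\<close>, of "m * N"]
    proof eventually_elim
      case (elim s)
      have "F (t + s) - F t = (g (z1 + s *\<^sub>R d) - g z1) + (g (z2 + s *\<^sub>R (- d)) - g z2)
          - m * N * (s * (l - s))"
        by (simp add: F_def z1_def z2_def l_def power2_eq_square algebra_simps)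
      also have "\<dots> \<le> s * (m * l * N) + s * e / 2 - m * N * (s * (l - s))"
        using elim mult_left_mono[OF der, of s] by (auto simp: algebra_simps)
      also have "\<dots> \<le> e * s"
      proof -
        have "s * (s * (m * N)) \<le> s * (e / 2)" using elim by (intro mult_left_mono) auto
        then show ?thesis by (simp add: algebra_simps)
      qed
      finally show ?case .
    qed
  qed simp
  moreover have "x + (1/2) *\<^sub>R d = (1/2) *\<^sub>R (x + y)"
    using scaleR_add_left[of "1/2" "1/2" x] by (simp add: d_def algebra_simps)
  then have "F (1/2) = 2 * g ((1/2) *\<^sub>R (x + y)) - m * N / 4"
    by (simp add: F_def power2_eq_square)
  moreover have "F 0 = g x + g y" by (simp add: F_def d_def)
  moreover have "N = (norm (x - y))\<^sup>2" by (simp add: N_def d_def norm_minus_commute)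
  ultimately show ?thesis by simp
qed

lemma relaxed_monotone_lower_bound:
  assumes g: "loc_lipschitz g" "relaxed_monotone m g" and m: "m \<ge> 0"
    and K: "\<And>z. - (K * norm z) \<le> clarke_der g x z"
  shows "g x - g y \<le> m * (norm (y - x))\<^sup>2 / 2 + K * norm (y - x)"
proof -
  define v where "v = y - x"
  define N where "N = (norm v)\<^sup>2"
  define F where "F s = g (x + (1 - s) *\<^sub>R v) - (m * N * (s - s\<^sup>2 / 2) + K * norm v * s)" for s
  have "F 1 \<le> F 0"
  proof (rule dini_nonincreasing)
    show "continuous_on {0..1} F"
      unfolding F_def by (intro loc_lipschitz_continuous_on_path[OF g(1)] continuous_intros) auto
    fix s e :: real assume s: "0 \<le> s" "s < 1" and e: "e > 0"
    define z where "z = x + (1 - s) *\<^sub>R v"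
    define l where "l = 1 - s"
    have l: "l > 0" using s by (simp add: l_def)
    have "z - x = l *\<^sub>R v" by (simp add: z_def l_def)
    then have "clarke_der g x v + clarke_der g z (- v) \<le> m * l * N"
      unfolding N_def by (rule relaxed_monotone_clarke_der_segment[OF g l])
    then have der: "clarke_der g z (- v) \<le> m * l * N + K * norm v"
      using K[of v] by linarith
    have "e/2 > 0" using e by simp
    show "eventually (\<lambda>\<sigma>. F (s + \<sigma>) - F s \<le> e * \<sigma>) (at_right 0)"
      using eventually_right_increment_less[OF g(1) \<open>e/2 > 0\<close>, of z "- v"]
        eventually_at_right_mult_less[OF e, of "m * N"]
    proof eventually_elim
      case (elim \<sigma>)
      have "x + (1 - (s + \<sigma>)) *\<^sub>R v = z + \<sigma> *\<^sub>R (- v)"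
        by (simp add: z_def algebra_simps)
      then have "F (s + \<sigma>) - F s = (g (z + \<sigma> *\<^sub>R (- v)) - g z)
          - (m * N * (\<sigma> * (l - \<sigma> / 2)) + K * norm v * \<sigma>)"
        unfolding F_def z_def[symmetric] by (simp add: l_def power2_eq_square algebra_simps)
      also have "\<dots> \<le> \<sigma> * (m * l * N + K * norm v) + \<sigma> * e / 2
          - (m * N * (\<sigma> * (l - \<sigma> / 2)) + K * norm v * \<sigma>)"
        using elim mult_left_mono[OF der, of \<sigma>] by (auto simp: algebra_simps)
      also have "\<dots> \<le> e * \<sigma>"
      proof -
        have "\<sigma> * (\<sigma> * (m * N)) \<le> \<sigma> * e" using elim by (intro mult_left_mono) auto
        then show ?thesis by (simp add: algebra_simps)
      qed
      finally show ?case .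
    qed
  qed simp
  moreover have "x + (1 - 1) *\<^sub>R v = x" "x + (1 - 0) *\<^sub>R v = y" by (simp_all add: v_def)
  ultimately show ?thesis by (simp add: F_def N_def v_def power2_eq_square)
qed

lemma loc_lipschitz_comp_blinfun:
  fixes T :: "'a::real_normed_vector \<Rightarrow>\<^sub>L 'b::real_normed_vector"
  assumes g: "loc_lipschitz g"
  shows "loc_lipschitz (\<lambda>z. g (T z))"
  unfolding loc_lipschitz_def
proof
  fix x
  obtain r L where rL: "r > 0" "L \<ge> 0" "L-lipschitz_on (ball (T x) r) g"
    using loc_lipschitzE[OF g] by blast
  define n where "n = norm T + 1"
  have n: "n > 0" by (simp add: n_def add_nonneg_pos)
  have T_dist: "dist (T y) (T z) \<le> n * dist y z" for y z
  proof -
    have "dist (T y) (T z) \<le> norm T * dist y z"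
      by (metis dist_norm norm_blinfun blinfun.diff_right)
    also have "\<dots> \<le> n * dist y z" by (simp add: n_def distrib_right)
    finally show ?thesis .
  qed
  have T_ball: "T y \<in> ball (T x) r" if "y \<in> ball x (r / n)" for y
  proof -
    have "dist (T x) (T y) \<le> n * dist x y" by (rule T_dist)
    also have "\<dots> < r" using that n by (simp add: pos_less_divide_eq mult.commute)
    finally show ?thesis by simp
  qed
  have "(L * n)-lipschitz_on (ball x (r / n)) (\<lambda>z. g (T z))"
  proof (rule lipschitz_onI)
    fix y z assume "y \<in> ball x (r / n)" "z \<in> ball x (r / n)"
    then have "dist (g (T y)) (g (T z)) \<le> L * dist (T y) (T z)"
      by (intro lipschitz_onD[OF rL(3)] T_ball)
    also have "dist (T y) (T z) \<le> n * dist y z" by (rule T_dist)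
    finally show "dist (g (T y)) (g (T z)) \<le> L * n * dist y z"
      using rL(2) mult_left_mono by (simp add: mult.assoc) blast
  qed (use rL(2) n in simp)
  then show "\<exists>r>0. \<exists>L. L-lipschitz_on (ball x r) (\<lambda>z. g (T z))"
    using rL(1) n by (intro exI[of _ "r / n"] conjI exI[of _ "L * n"]) auto
qed

lemma relaxed_monotone_comp_blinfun:
  fixes T :: "'a::real_normed_vector \<Rightarrow>\<^sub>L 'b::real_normed_vector"
  assumes g: "relaxed_monotone m g" and m: "m \<ge> 0"
  shows "relaxed_monotone (m * (norm T)\<^sup>2) (\<lambda>z. g (T z))"
  unfolding relaxed_monotone_def
proof (intro allI)
  fix x y
  have "clarke_dd (\<lambda>z. g (T z)) x (y - x) + clarke_dd (\<lambda>z. g (T z)) y (x - y)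
      \<le> clarke_dd g (T x) (T y - T x) + clarke_dd g (T y) (T x - T y)"
    using add_mono[OF clarke_dd_comp_blinfun_le[of g T x "y - x"] clarke_dd_comp_blinfun_le[of g T y "x - y"]]
    by (simp add: blinfun.diff_right)
  also have "\<dots> \<le> ereal (m * (norm (T x - T y))\<^sup>2)"
    using g unfolding relaxed_monotone_def by blast
  also have "(norm (T x - T y))\<^sup>2 \<le> (norm T)\<^sup>2 * (norm (x - y))\<^sup>2"
    using norm_blinfun[of T "x - y"]
    by (simp add: blinfun.diff_right power_mult_distrib[symmetric] power_mono)
  then have "ereal (m * (norm (T x - T y))\<^sup>2) \<le> ereal (m * (norm T)\<^sup>2 * (norm (x - y))\<^sup>2)"
    using m by (simp add: mult.assoc mult_left_mono)
  finally show "clarke_dd (\<lambda>z. g (T z)) x (y - x) + clarke_dd (\<lambda>z. g (T z)) y (x - y)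
      \<le> ereal (m * (norm T)\<^sup>2 * (norm (x - y))\<^sup>2)" .
qed

text \<open>Minimising sequences are Cauchy by the midpoint inequality, so completeness replaces the
  usual weak compactness argument.\<close>

lemma uniformly_midpoint_convex_has_min:
  fixes g :: "'a::banach \<Rightarrow> real"
  assumes cont: "\<And>x. isCont g x" and bdd: "bdd_below (range g)" and \<mu>: "\<mu> > 0"
    and mid: "\<And>x y. g ((1/2) *\<^sub>R (x + y)) \<le> (g x + g y) / 2 - \<mu> * (norm (x - y))\<^sup>2"
  obtains x where "\<And>y. g x \<le> g y"
proof -
  define I where "I = Inf (range g)"
  have I: "I \<le> g y" for y unfolding I_def by (rule cInf_lower[OF _ bdd]) simp
  define r where "r n = inverse (real (Suc n))" for n
  have "\<exists>x. g x < I + r n" for n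
    using cInf_lessD[of "range g" "I + r n"] by (auto simp: I_def r_def)
  then obtain X where X: "\<And>n. g (X n) < I + r n" by metis
  have "Cauchy X"
    unfolding Cauchy_def
  proof (intro allI impI)
    fix e :: real assume e: "e > 0"
    obtain M where M: "r M < \<mu> * e\<^sup>2"
      using reals_Archimedean[of "\<mu> * e\<^sup>2"] \<mu> e by (auto simp: r_def)
    have "dist (X m) (X n) < e" if "m \<ge> M" "n \<ge> M" for m n
    proof -
      have "r m \<le> r M" "r n \<le> r M"
        using that by (simp_all add: r_def le_imp_inverse_le)
      then have "(g (X m) + g (X n)) / 2 - I < r M"
        using X[of m] X[of n] by (simp add: field_simps)
      moreover have "\<mu> * (norm (X m - X n))\<^sup>2 \<le> (g (X m) + g (X n)) / 2 - I"
        using mid[of "X m" "X n"] I[of "(1/2) *\<^sub>R (X m + X n)"] by simp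
      ultimately have "\<mu> * (norm (X m - X n))\<^sup>2 < \<mu> * e\<^sup>2" using M by linarith
      then have "(norm (X m - X n))\<^sup>2 < e\<^sup>2" using \<mu> by simp
      then show ?thesis using e by (simp add: dist_norm power_less_imp_less_base)
    qed
    then show "\<exists>M. \<forall>m\<ge>M. \<forall>n\<ge>M. dist (X m) (X n) < e" by blast
  qed
  then obtain x where x: "X \<longlonglongrightarrow> x" using Cauchy_convergent convergent_def by blast
  have "g x \<le> I"
    by (rule LIMSEQ_le[OF isCont_tendsto_compose[OF cont x] LIMSEQ_inverse_real_of_nat_add])
      (use X less_imp_le in \<open>auto simp: r_def\<close>)
  with I that show ?thesis by (meson order_trans)
qed

section \<open>The Hahn-Banach theorem\<close>

locale sublinear =
  fixes p :: "'a::real_vector \<Rightarrow> real"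
  assumes add_le: "p (x + y) \<le> p x + p y"
    and scaleR_nonneg: "a \<ge> 0 \<Longrightarrow> p (a *\<^sub>R x) = a * p x"
begin

lemma zero: "p 0 = 0"
  using scaleR_nonneg[of 0 0] by simp

text \<open>Linear functionals on subspaces are represented by their graphs, so that Zorn's lemma
  can be applied to the inclusion order.\<close>

definition dominated_graph :: "('a \<times> real) set \<Rightarrow> bool" where
  "dominated_graph G \<longleftrightarrow> (0, 0) \<in> G
     \<and> (\<forall>x a b. (x, a) \<in> G \<longrightarrow> (x, b) \<in> G \<longrightarrow> a = b)
     \<and> (\<forall>x a y b. (x, a) \<in> G \<longrightarrow> (y, b) \<in> G \<longrightarrow> (x + y, a + b) \<in> G)
     \<and> (\<forall>x a c. (x, a) \<in> G \<longrightarrow> (c *\<^sub>R x, c * a) \<in> G)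
     \<and> (\<forall>x a. (x, a) \<in> G \<longrightarrow> a \<le> p x)"

lemma dominated_graphD:
  assumes "dominated_graph G"
  shows dominated_graph_zero: "(0, 0) \<in> G"
    and dominated_graph_unique: "\<And>x a b. (x, a) \<in> G \<Longrightarrow> (x, b) \<in> G \<Longrightarrow> a = b"
    and dominated_graph_add: "\<And>x a y b. (x, a) \<in> G \<Longrightarrow> (y, b) \<in> G \<Longrightarrow> (x + y, a + b) \<in> G"
    and dominated_graph_scaleR: "\<And>x a c. (x, a) \<in> G \<Longrightarrow> (c *\<^sub>R x, c * a) \<in> G"
    and dominated_graph_le: "\<And>x a. (x, a) \<in> G \<Longrightarrow> a \<le> p x"
  using assms unfolding dominated_graph_def by blast+

text \<open>The value \<open>c\<close> at the new direction \<open>y\<close> has to lie between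
  \<open>sup {a - p (m - y) | (m, a) \<in> G}\<close> and \<open>inf {p (m + y) - a | (m, a) \<in> G}\<close>.\<close>

lemma dominated_graph_extension_value:
  assumes G: "dominated_graph G"
  obtains c where "\<And>m a t. (m, a) \<in> G \<Longrightarrow> a + t * c \<le> p (m + t *\<^sub>R y)"
proof -
  note G0 = dominated_graph_zero[OF G] and Ga = dominated_graph_add[OF G]
    and Gs = dominated_graph_scaleR[OF G] and Gp = dominated_graph_le[OF G]
  define T where "T = {a - p (m - y) | m a. (m, a) \<in> G}"
  have sep: "a1 - p (m1 - y) \<le> p (m2 + y) - a2" if "(m1, a1) \<in> G" "(m2, a2) \<in> G" for m1 a1 m2 a2
    using Gp[OF Ga[OF that]] add_le[of "m1 - y" "m2 + y"] by simp
  have T: "T \<noteq> {}" "bdd_above T"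
    using G0 sep[OF _ G0] unfolding T_def by (auto intro!: bdd_aboveI[of _ "p y"])
  have above: "Sup T \<le> p (m + y) - a" if "(m, a) \<in> G" for m a
    using sep[OF _ that] by (intro cSup_least[OF T(1)]) (auto simp: T_def)
  have below: "a - p (m - y) \<le> Sup T" if "(m, a) \<in> G" for m a
    using that by (intro cSup_upper[OF _ T(2)]) (auto simp: T_def)
  show ?thesis
  proof (rule that[of "Sup T"])
    fix m a and t :: real assume ma: "(m, a) \<in> G"
    consider "t > 0" | "t = 0" | "t < 0" by linarith
    then show "a + t * Sup T \<le> p (m + t *\<^sub>R y)"
    proof cases
      case 1
      have "(m /\<^sub>R t, a / t) \<in> G" using Gs[OF ma, of "inverse t"] by (simp add: divide_inverse mult.commute)
      from above[OF this] 1 have "t * Sup T \<le> t * p (m /\<^sub>R t + y) - a"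
        by (simp add: field_simps)
      also have "t * p (m /\<^sub>R t + y) = p (m + t *\<^sub>R y)"
        using 1 scaleR_nonneg[of t "m /\<^sub>R t + y"] by (simp add: scaleR_add_right)
      finally show ?thesis by simp
    next
      case 2
      then show ?thesis using Gp[OF ma] by simp
    next
      case 3
      have "(m /\<^sub>R (- t), a / (- t)) \<in> G"
        using Gs[OF ma, of "inverse (- t)"] by (simp add: divide_inverse mult.commute)
      from below[OF this] 3 have "a - (- t) * p (m /\<^sub>R (- t) - y) \<le> (- t) * Sup T"
        by (simp add: field_simps)
      also have "(- t) * p (m /\<^sub>R (- t) - y) = p (m + t *\<^sub>R y)"
        using 3 scaleR_nonneg[of "- t" "m /\<^sub>R (- t) - y"] by (simp add: scaleR_diff_right)
      finally show ?thesis by simp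
    qed
  qed
qed

lemma dominated_graph_adjoin:
  assumes G: "dominated_graph G" and y: "\<And>a. (y, a) \<notin> G"
    and c: "\<And>m a t. (m, a) \<in> G \<Longrightarrow> a + t * c \<le> p (m + t *\<^sub>R y)"
  shows "dominated_graph {(m + t *\<^sub>R y, a + t * c) | m a t. (m, a) \<in> G}" (is "dominated_graph ?G'")
  unfolding dominated_graph_def
proof (intro conjI allI impI)
  note G0 = dominated_graph_zero[OF G] and Gf = dominated_graph_unique[OF G]
    and Ga = dominated_graph_add[OF G] and Gs = dominated_graph_scaleR[OF G]
  show "(0, 0) \<in> ?G'" using G0 by force
next
  fix x a b assume "(x, a) \<in> ?G'" "(x, b) \<in> ?G'"
  then obtain m1 a1 t1 m2 a2 t2 where m: "(m1, a1) \<in> G" "(m2, a2) \<in> G"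
    "x = m1 + t1 *\<^sub>R y" "a = a1 + t1 * c" "x = m2 + t2 *\<^sub>R y" "b = a2 + t2 * c"
    by blast
  have diff: "(m1 - m2, a1 - a2) \<in> G"
    using dominated_graph_add[OF G m(1) dominated_graph_scaleR[OF G m(2), of "-1"]] by simp
  have "t1 = t2"
  proof (rule ccontr)
    assume "t1 \<noteq> t2"
    moreover have "m1 - m2 = (t2 - t1) *\<^sub>R y" using m(3,5) by (simp add: algebra_simps)
    ultimately have "y = inverse (t2 - t1) *\<^sub>R (m1 - m2)" by simp
    then show False using dominated_graph_scaleR[OF G diff, of "inverse (t2 - t1)"] y by metis
  qed
  with m dominated_graph_unique[OF G] show "a = b" by auto
next
  fix x a z b assume "(x, a) \<in> ?G'" "(z, b) \<in> ?G'"
  then obtain m1 a1 t1 m2 a2 t2 where m: "(m1, a1) \<in> G" "(m2, a2) \<in> G"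
    "x = m1 + t1 *\<^sub>R y" "a = a1 + t1 * c" "z = m2 + t2 *\<^sub>R y" "b = a2 + t2 * c"
    by blast
  then have "x + z = (m1 + m2) + (t1 + t2) *\<^sub>R y" "a + b = (a1 + a2) + (t1 + t2) * c"
    by (simp_all add: algebra_simps)
  then show "(x + z, a + b) \<in> ?G'" using dominated_graph_add[OF G m(1,2)] by blast
next
  fix x a s assume "(x, a) \<in> ?G'"
  then obtain m a1 t where m: "(m, a1) \<in> G" "x = m + t *\<^sub>R y" "a = a1 + t * c"
    by blast
  then have "s *\<^sub>R x = s *\<^sub>R m + (s * t) *\<^sub>R y" "s * a = s * a1 + (s * t) * c"
    by (simp_all add: algebra_simps)
  then show "(s *\<^sub>R x, s * a) \<in> ?G'" using dominated_graph_scaleR[OF G m(1)] by blast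
next
  fix x a assume "(x, a) \<in> ?G'"
  then show "a \<le> p x" using c by blast
qed

lemma dominated_graph_extend:
  assumes G: "dominated_graph G" and y: "\<And>a. (y, a) \<notin> G"
  obtains G' where "dominated_graph G'" "G \<subset> G'"
proof -
  obtain c where c: "\<And>m a t. (m, a) \<in> G \<Longrightarrow> a + t * c \<le> p (m + t *\<^sub>R y)"
    using dominated_graph_extension_value[OF G] by blast
  define G' where "G' = {(m + t *\<^sub>R y, a + t * c) | m a t. (m, a) \<in> G}"
  have "G \<subseteq> G'" unfolding G'_def by (force intro: exI[of _ 0])
  moreover have "(y, c) \<in> G'"
    unfolding G'_def using dominated_graph_zero[OF G] by (force intro: exI[of _ 1])
  ultimately show ?thesis
    using dominated_graph_adjoin[OF G y c] y that unfolding G'_def[symmetric] by blast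
qed

lemma dominated_graph_Union_chain:
  assumes C: "C \<noteq> {}" "\<And>G. G \<in> C \<Longrightarrow> dominated_graph G"
    and chain: "\<And>G H. G \<in> C \<Longrightarrow> H \<in> C \<Longrightarrow> G \<subseteq> H \<or> H \<subseteq> G"
  shows "dominated_graph (\<Union>C)"
proof -
  have common: "\<exists>G\<in>C. (x, a) \<in> G \<and> (y, b) \<in> G"
    if "(x, a) \<in> \<Union>C" "(y, b) \<in> \<Union>C" for x a y b
  proof -
    from that obtain G H where "G \<in> C" "H \<in> C" "(x, a) \<in> G" "(y, b) \<in> H" by blast
    with chain[of G H] show ?thesis by blast
  qed
  show ?thesis
    unfolding dominated_graph_def
  proof (intro conjI allI impI)
    show "(0, 0) \<in> \<Union>C" using C dominated_graph_zero by blast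
  next
    fix x a b assume "(x, a) \<in> \<Union>C" "(x, b) \<in> \<Union>C"
    then obtain G where "G \<in> C" "(x, a) \<in> G" "(x, b) \<in> G" using common by blast
    then show "a = b" using dominated_graph_unique C(2) by blast
  next
    fix x a y b assume "(x, a) \<in> \<Union>C" "(y, b) \<in> \<Union>C"
    then obtain G where "G \<in> C" "(x, a) \<in> G" "(y, b) \<in> G" using common by blast
    then show "(x + y, a + b) \<in> \<Union>C" using dominated_graph_add C(2) by blast
  next
    fix x a s assume "(x, a) \<in> \<Union>C"
    then show "(s *\<^sub>R x, s * a) \<in> \<Union>C" using dominated_graph_scaleR C(2) by blast
  next
    fix x a assume "(x, a) \<in> \<Union>C"
    then show "a \<le> p x" using dominated_graph_le C(2) by blast
  qed
qed

lemma dominated_graph_maximal: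
  assumes B: "dominated_graph B"
  obtains M where "dominated_graph M" "B \<subseteq> M" "\<And>G. dominated_graph G \<Longrightarrow> M \<subseteq> G \<Longrightarrow> G = M"
proof -
  define \<A> where "\<A> = {G. dominated_graph G \<and> B \<subseteq> G}"
  have "\<exists>M\<in>\<A>. \<forall>G\<in>\<A>. M \<subseteq> G \<longrightarrow> G = M"
  proof (rule Zorn_Lemma2, intro ballI)
    fix C assume C: "C \<in> chains \<A>"
    show "\<exists>U\<in>\<A>. \<forall>G\<in>C. G \<subseteq> U"
    proof (cases "C = {}")
      case True
      with B show ?thesis unfolding \<A>_def by blast
    next
      case False
      have sub: "C \<subseteq> \<A>" using chainsD2[OF C] .
      have "dominated_graph (\<Union>C)"
        using sub by (intro dominated_graph_Union_chain[OF False _ chainsD[OF C]]) (auto simp: \<A>_def)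
      moreover have "B \<subseteq> \<Union>C" using False sub by (auto simp: \<A>_def)
      ultimately show ?thesis unfolding \<A>_def by blast
    qed
  qed
  then obtain M where "M \<in> \<A>" and max: "\<And>G. G \<in> \<A> \<Longrightarrow> M \<subseteq> G \<Longrightarrow> G = M"
    by blast
  then have "dominated_graph M" "B \<subseteq> M" unfolding \<A>_def by auto
  with max show ?thesis using that unfolding \<A>_def by blast
qed

theorem hahn_banach:
  assumes B: "dominated_graph B"
  obtains \<xi> where "linear \<xi>" "\<And>x. \<xi> x \<le> p x" "\<And>x a. (x, a) \<in> B \<Longrightarrow> \<xi> x = a"
proof -
  obtain M where M: "dominated_graph M" "B \<subseteq> M"
    and max: "\<And>G. dominated_graph G \<Longrightarrow> M \<subseteq> G \<Longrightarrow> G = M"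
    by (rule dominated_graph_maximal[OF B]) blast
  have total: "\<exists>a. (x, a) \<in> M" for x
  proof (rule ccontr)
    assume "\<nexists>a. (x, a) \<in> M"
    then have "\<And>a. (x, a) \<notin> M" by blast
    then obtain G where "dominated_graph G" "M \<subset> G" by (rule dominated_graph_extend[OF M(1)])
    with max show False by blast
  qed
  define \<xi> where "\<xi> x = (THE a. (x, a) \<in> M)" for x
  have graph: "(x, a) \<in> M \<longleftrightarrow> \<xi> x = a" for x a
  proof -
    obtain b where b: "(x, b) \<in> M" using total by blast
    then have "\<xi> x = b"
      unfolding \<xi>_def using dominated_graph_unique[OF M(1)] by (blast intro: the_equality)
    with b show ?thesis using dominated_graph_unique[OF M(1)] by blast
  qed
  show ?thesis
  proof (rule that)
    show "linear \<xi>"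
    proof (rule linearI)
      show "\<xi> (x + y) = \<xi> x + \<xi> y" for x y
        using dominated_graph_add[OF M(1)] graph by blast
      show "\<xi> (c *\<^sub>R x) = c *\<^sub>R \<xi> x" for c x
        using dominated_graph_scaleR[OF M(1)] graph by simp
    qed
    show "\<xi> x \<le> p x" for x using dominated_graph_le[OF M(1)] graph by blast
    show "\<xi> x = a" if "(x, a) \<in> B" for x a using that M(2) graph by blast
  qed
qed

corollary hahn_banach_factor:
  assumes T: "linear T" and \<phi>: "linear \<phi>" and dom: "\<And>v. \<phi> v \<le> p (T v)"
  obtains \<xi> where "linear \<xi>" "\<And>x. \<xi> x \<le> p x" "\<And>v. \<xi> (T v) = \<phi> v"
proof -
  define B where "B = range (\<lambda>v. (T v, \<phi> v))"
  have "dominated_graph B"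
    unfolding dominated_graph_def
  proof (intro conjI allI impI)
    show "(0, 0) \<in> B" unfolding B_def using linear_0[OF T] linear_0[OF \<phi>] by force
  next
    fix x a b assume "(x, a) \<in> B" "(x, b) \<in> B"
    then obtain v w where "x = T v" "a = \<phi> v" "x = T w" "b = \<phi> w" unfolding B_def by blast
    with dom[of "v - w"] dom[of "w - v"] show "a = b"
      using linear_diff[OF T] linear_diff[OF \<phi>] zero by simp
  next
    fix x a y b assume "(x, a) \<in> B" "(y, b) \<in> B"
    then obtain v w where "x = T v" "a = \<phi> v" "y = T w" "b = \<phi> w" unfolding B_def by blast
    then show "(x + y, a + b) \<in> B"
      unfolding B_def using linear_add[OF T] linear_add[OF \<phi>] by (auto intro!: image_eqI[of _ _ "v + w"])
  next
    fix x a c assume "(x, a) \<in> B"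
    then obtain v where "x = T v" "a = \<phi> v" unfolding B_def by blast
    then show "(c *\<^sub>R x, c * a) \<in> B"
      unfolding B_def using linear_scale[OF T] linear_scale[OF \<phi>] by (auto intro!: image_eqI[of _ _ "c *\<^sub>R v"])
  next
    fix x a assume "(x, a) \<in> B"
    then show "a \<le> p x" unfolding B_def using dom by blast
  qed
  then show ?thesis
  proof (rule hahn_banach)
    fix \<xi> assume \<xi>: "linear \<xi>" "\<And>x. \<xi> x \<le> p x" "\<And>x a. (x, a) \<in> B \<Longrightarrow> \<xi> x = a"
    show thesis by (rule that[OF \<xi>(1,2)]) (simp add: \<xi>(3) B_def)
  qed
qed

end

section \<open>The problems (I) and (O)\<close>

locale hemivariational =
  fixes A :: "'v::banach \<Rightarrow> ('v \<Rightarrow>\<^sub>L real)" and J :: "'x::banach \<Rightarrow> 'x \<Rightarrow> real"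
    and \<gamma> :: "'v \<Rightarrow>\<^sub>L 'x" and m_A m_alpha m_L :: real and f :: "'v \<Rightarrow>\<^sub>L real"
  assumes A1: "bounded_linear A"
    and A2: "\<And>u v. A u v = A v u"
    and A3: "\<And>u. A u u \<ge> m_A * (norm u)\<^sup>2"
    and J1: "\<And>w. loc_lipschitz (J w)"
    and J3: "m_alpha \<ge> 0" "m_L \<ge> 0"
      "\<And>w1 w2 v1 v2. clarke_dd (J w1) v1 (v2 - v1) + clarke_dd (J w2) v2 (v1 - v2)
          \<le> ereal (m_alpha * (norm (v1 - v2))\<^sup>2 + m_L * norm (w1 - w2) * norm (v1 - v2))"
    and S: "m_A > (m_alpha + m_L) * (norm \<gamma>)\<^sup>2"
begin

sublocale form: bounded_bilinear "\<lambda>u. blinfun_apply (A u)"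
  by (rule bounded_bilinear.comp1[OF bounded_bilinear_blinfun_apply A1])

abbreviation L :: "'v \<Rightarrow> 'v \<Rightarrow> real" where
  "L \<equiv> lagr A f J \<gamma>"

lemma m_A_minus_relaxation_pos: "m_A - m_alpha * (norm \<gamma>)\<^sup>2 > 0"
proof -
  have "m_alpha * (norm \<gamma>)\<^sup>2 \<le> (m_alpha + m_L) * (norm \<gamma>)\<^sup>2"
    using J3(2) by (simp add: distrib_right)
  then show ?thesis using S by linarith
qed

lemma J_relaxed_monotone: "relaxed_monotone m_alpha (J w)"
  unfolding relaxed_monotone_def using J3(3)[of w _ _ w] by simp

lemma J_comp_loc_lipschitz: "loc_lipschitz (\<lambda>z. J w (\<gamma> z))"
  by (rule loc_lipschitz_comp_blinfun[OF J1])

lemma J_comp_relaxed_monotone: "relaxed_monotone (m_alpha * (norm \<gamma>)\<^sup>2) (\<lambda>z. J w (\<gamma> z))"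
  by (rule relaxed_monotone_comp_blinfun[OF J_relaxed_monotone J3(1)])

lemma lagr_midpoint:
  "L w ((1/2) *\<^sub>R (x + y))
     \<le> (L w x + L w y) / 2 - (m_A - m_alpha * (norm \<gamma>)\<^sup>2) / 8 * (norm (x - y))\<^sup>2"
proof -
  have J_mid: "2 * J (\<gamma> w) (\<gamma> ((1/2) *\<^sub>R (x + y)))
      \<le> J (\<gamma> w) (\<gamma> x) + J (\<gamma> w) (\<gamma> y) + m_alpha * (norm \<gamma>)\<^sup>2 * (norm (x - y))\<^sup>2 / 4"
    using J3(1) by (intro relaxed_monotone_midpoint[OF J_comp_loc_lipschitz J_comp_relaxed_monotone]) simp
  have "A ((1/2) *\<^sub>R (x + y)) ((1/2) *\<^sub>R (x + y)) = (A x x + 2 * A x y + A y y) / 4"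
    by (simp add: form.add_left form.add_right form.scaleR_left form.scaleR_right A2[of y x] field_simps)
  moreover have "A (x - y) (x - y) = A x x - 2 * A x y + A y y"
    by (simp add: form.diff_left form.diff_right A2[of y x])
  moreover have "f ((1/2) *\<^sub>R (x + y)) = (f x + f y) / 2"
    by (simp add: blinfun.bilinear_simps)
  ultimately show ?thesis
    using J_mid A3[of "x - y"] by (simp add: lagr_def field_simps)
qed

lemma lagr_bdd_below: "bdd_below (range (L w))"
proof -
  define h where "h z = J (\<gamma> w) (\<gamma> z)" for z
  have h: "loc_lipschitz h" "relaxed_monotone (m_alpha * (norm \<gamma>)\<^sup>2) h"
    unfolding h_def[abs_def] by (rule J_comp_loc_lipschitz J_comp_relaxed_monotone)+
  obtain K where K: "\<And>z. \<bar>clarke_der h 0 z\<bar> \<le> K * norm z"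
    using clarke_der_abs_le[OF h(1)] by blast
  have K': "- (K * norm z) \<le> clarke_der h 0 z" for z using K[of z] by (simp add: abs_le_iff)
  define \<alpha> where "\<alpha> = (m_A - m_alpha * (norm \<gamma>)\<^sup>2) / 2"
  define \<beta> where "\<beta> = norm f + K"
  have \<alpha>: "\<alpha> > 0" using m_A_minus_relaxation_pos by (simp add: \<alpha>_def)
  have "h 0 - \<beta>\<^sup>2 / (4 * \<alpha>) \<le> L w v" for v
  proof -
    define r where "r = norm v"
    have "h 0 - h v \<le> m_alpha * (norm \<gamma>)\<^sup>2 * r\<^sup>2 / 2 + K * r"
      using relaxed_monotone_lower_bound[OF h _ K', of v] J3(1) unfolding r_def by simp
    moreover have "f v \<le> norm f * r" using norm_blinfun[of f v] unfolding r_def by simp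
    moreover have "m_A * r\<^sup>2 \<le> A v v" using A3[of v] unfolding r_def .
    ultimately have "1/2 * (m_A * r\<^sup>2) - norm f * r + (h 0 - (m_alpha * (norm \<gamma>)\<^sup>2 * r\<^sup>2 / 2 + K * r))
        \<le> L w v"
      unfolding lagr_def h_def by linarith
    moreover have "1/2 * (m_A * r\<^sup>2) - norm f * r + (h 0 - (m_alpha * (norm \<gamma>)\<^sup>2 * r\<^sup>2 / 2 + K * r))
        = h 0 + (\<alpha> * r\<^sup>2 - \<beta> * r)"
      by (simp add: \<alpha>_def \<beta>_def field_simps)
    moreover have "(\<alpha> * r\<^sup>2 - \<beta> * r) * (4 * \<alpha>) + \<beta>\<^sup>2 = (2 * \<alpha> * r - \<beta>)\<^sup>2"
      by (simp add: power2_eq_square algebra_simps)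
    then have "- (\<beta>\<^sup>2) \<le> (\<alpha> * r\<^sup>2 - \<beta> * r) * (4 * \<alpha>)"
      using zero_le_power2[of "2 * \<alpha> * r - \<beta>"] by linarith
    then have "- (\<beta>\<^sup>2 / (4 * \<alpha>)) \<le> \<alpha> * r\<^sup>2 - \<beta> * r"
      using \<alpha> by (simp add: field_simps)
    ultimately show ?thesis by linarith
  qed
  then show ?thesis by (intro bdd_belowI2) blast
qed

lemma lagr_isCont: "isCont (L w) x"
proof -
  have "isCont (\<lambda>v. A v v) x"
    using form.continuous[OF continuous_ident continuous_ident] by simp
  moreover have "isCont (\<lambda>v. f v) x"
    by (rule linear_continuous_at[OF blinfun.bounded_linear_right])
  moreover have "isCont (\<lambda>v. J (\<gamma> w) (\<gamma> v)) x"
    by (rule loc_lipschitz_isCont[OF J_comp_loc_lipschitz])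
  ultimately show ?thesis
    unfolding lagr_def by (intro continuous_add continuous_diff continuous_mult continuous_const)
qed

lemma lagr_has_min:
  obtains x where "\<And>y. L w x \<le> L w y"
  by (rule uniformly_midpoint_convex_has_min[OF lagr_isCont lagr_bdd_below _ lagr_midpoint])
    (use m_A_minus_relaxation_pos in auto)

lemma zero_in_subdiff_lagr_iff:
  "0 \<in> clarke_subdiff (L w) x \<longleftrightarrow>
     (\<forall>v. ereal (f v - A x v) \<le> clarke_dd (\<lambda>z. J (\<gamma> w) (\<gamma> z)) x v)"
proof -
  define h where "h z = J (\<gamma> w) (\<gamma> z)" for z
  have h: "loc_lipschitz h" unfolding h_def[abs_def] by (rule J_comp_loc_lipschitz)
  have shift: "clarke_dd (L w) x v = clarke_dd h x v + ereal (A x v - f v)" for v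
  proof (rule clarke_dd_add_smooth[OF h])
    show "eventually (\<lambda>p. clarke_quot (L w) v p
        = clarke_quot h v p + (A (fst p) v + snd p / 2 * A v v - f v)) (clarke_filter x)"
      using eventually_clarke_filter_pos
    proof eventually_elim
      case (elim p)
      obtain y t where p: "p = (y, t)" by (cases p)
      have "L w (y + t *\<^sub>R v) - L w y
          = t * A y v + t * t / 2 * A v v - t * f v + (h (y + t *\<^sub>R v) - h y)"
        by (simp add: lagr_def h_def form.add_left form.add_right form.scaleR_left
            form.scaleR_right blinfun.bilinear_simps A2[of v y] algebra_simps)
      then have "clarke_quot (L w) v p
          = (t * A y v + t * t / 2 * A v v - t * f v + (h (y + t *\<^sub>R v) - h y)) / t"
        by (simp add: p clarke_quot_def)
      also have "\<dots> = (h (y + t *\<^sub>R v) - h y) / t + (A y v + t / 2 * A v v - f v)"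
        using elim by (simp add: p field_simps)
      finally show ?case by (simp add: p clarke_quot_def)
    qed
    have "((\<lambda>p. A (fst p) v) \<longlongrightarrow> A x v) (clarke_filter x)"
      by (intro form.tendsto filterlim_fst tendsto_const)
    moreover have "((\<lambda>p. snd p / 2 * A v v) \<longlongrightarrow> 0) (clarke_filter x)"
      by (intro tendsto_mult_left_zero tendsto_divide_zero
          filterlim_mono[OF filterlim_snd at_within_le_nhds order_refl])
    ultimately show "((\<lambda>p. A (fst p) v + snd p / 2 * A v v - f v) \<longlongrightarrow> A x v - f v) (clarke_filter x)"
      using tendsto_diff[OF tendsto_add tendsto_const] by fastforce
  qed
  show ?thesis
    unfolding clarke_subdiff_def h_def[symmetric]
    by (simp add: shift clarke_dd_eq_ereal[OF h] algebra_simps)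
qed

text \<open>The hemivariational inequality of Problem (I), with the first argument of \<open>J\<close> frozen at
  \<open>w\<close>.\<close>

definition hvi :: "'x \<Rightarrow> 'v \<Rightarrow> bool" where
  "hvi w x \<longleftrightarrow> (\<forall>v. ereal (f v - A x v) \<le> clarke_dd (J w) (\<gamma> x) (\<gamma> v))"

lemma zero_in_subdiff_lagr_imp_hvi: "0 \<in> clarke_subdiff (L w) x \<Longrightarrow> hvi (\<gamma> w) x"
  unfolding zero_in_subdiff_lagr_iff hvi_def using clarke_dd_comp_blinfun_le order_trans by blast

lemma hvi_estimate:
  assumes "hvi w1 x1" "hvi w2 x2"
  shows "(m_A - m_alpha * (norm \<gamma>)\<^sup>2) * norm (x1 - x2) \<le> m_L * norm \<gamma> * norm (w1 - w2)"
proof -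
  define d where "d = norm (x1 - x2)"
  have \<gamma>d: "norm (\<gamma> x1 - \<gamma> x2) \<le> norm \<gamma> * d"
    unfolding d_def by (metis norm_blinfun blinfun.diff_right)
  have "ereal (f (x2 - x1) - A x1 (x2 - x1)) \<le> clarke_dd (J w1) (\<gamma> x1) (\<gamma> x2 - \<gamma> x1)"
    "ereal (f (x1 - x2) - A x2 (x1 - x2)) \<le> clarke_dd (J w2) (\<gamma> x2) (\<gamma> x1 - \<gamma> x2)"
    using assms unfolding hvi_def by (metis blinfun.diff_right)+
  then have "ereal (f (x2 - x1) - A x1 (x2 - x1)) + ereal (f (x1 - x2) - A x2 (x1 - x2))
      \<le> clarke_dd (J w1) (\<gamma> x1) (\<gamma> x2 - \<gamma> x1) + clarke_dd (J w2) (\<gamma> x2) (\<gamma> x1 - \<gamma> x2)"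
    by (rule add_mono)
  also have "\<dots> \<le> ereal (m_alpha * (norm (\<gamma> x1 - \<gamma> x2))\<^sup>2
      + m_L * norm (w1 - w2) * norm (\<gamma> x1 - \<gamma> x2))"
    by (rule J3(3))
  finally have "A (x1 - x2) (x1 - x2) \<le> m_alpha * (norm (\<gamma> x1 - \<gamma> x2))\<^sup>2
      + m_L * norm (w1 - w2) * norm (\<gamma> x1 - \<gamma> x2)"
    by (simp add: form.diff_left form.diff_right blinfun.bilinear_simps algebra_simps)
  also have "\<dots> \<le> m_alpha * (norm \<gamma> * d)\<^sup>2 + m_L * norm (w1 - w2) * (norm \<gamma> * d)"
    using \<gamma>d J3(1,2) by (intro add_mono mult_left_mono power_mono) auto
  finally have "m_A * d\<^sup>2 \<le> m_alpha * (norm \<gamma>)\<^sup>2 * d\<^sup>2 + m_L * norm \<gamma> * norm (w1 - w2) * d"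
    using A3[of "x1 - x2"] by (simp add: d_def power_mult_distrib algebra_simps)
  then have "d * ((m_A - m_alpha * (norm \<gamma>)\<^sup>2) * d) \<le> d * (m_L * norm \<gamma> * norm (w1 - w2))"
    by (simp add: power2_eq_square algebra_simps)
  moreover have "d \<ge> 0" by (simp add: d_def)
  ultimately show ?thesis
    using J3(2) by (cases "d = 0") (auto simp: d_def)
qed

lemma hvi_unique:
  assumes "hvi (\<gamma> x1) x1" "hvi (\<gamma> x2) x2"
  shows "x1 = x2"
proof -
  define d where "d = norm (x1 - x2)"
  have "(m_A - m_alpha * (norm \<gamma>)\<^sup>2) * d \<le> m_L * norm \<gamma> * norm (\<gamma> x1 - \<gamma> x2)"
    using hvi_estimate[OF assms] by (simp add: d_def)
  also have "\<dots> \<le> m_L * norm \<gamma> * (norm \<gamma> * d)"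
    using J3(2) unfolding d_def by (intro mult_left_mono) (auto simp: norm_blinfun blinfun.diff_right[symmetric])
  finally have "(m_A - (m_alpha + m_L) * (norm \<gamma>)\<^sup>2) * d \<le> 0"
    by (simp add: power2_eq_square algebra_simps)
  with S have "d \<le> 0" by (simp add: mult_le_0_iff)
  then show ?thesis by (simp add: d_def)
qed

lemma hvi_norm_le:
  assumes sol: "hvi (\<gamma> u) u" and K: "K \<ge> 0" "\<And>z. - (K * norm z) \<le> clarke_der (J 0) 0 z"
  shows "(m_A - (m_alpha + m_L) * (norm \<gamma>)\<^sup>2) * norm u \<le> norm f + K * norm \<gamma>"
proof -
  define r where "r = norm u"
  have \<gamma>u: "norm (\<gamma> u) \<le> norm \<gamma> * r" unfolding r_def by (rule norm_blinfun)
  have "ereal (f (- u) - A u (- u)) \<le> clarke_dd (J (\<gamma> u)) (\<gamma> u) (0 - \<gamma> u)"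
    using sol unfolding hvi_def by (metis blinfun.minus_right diff_0)
  moreover have "ereal (- (K * norm (\<gamma> u))) \<le> clarke_dd (J 0) 0 (\<gamma> u - 0)"
    using K(2)[of "\<gamma> u"] by (simp add: clarke_dd_eq_ereal[OF J1])
  ultimately have "ereal (f (- u) - A u (- u)) + ereal (- (K * norm (\<gamma> u)))
      \<le> clarke_dd (J (\<gamma> u)) (\<gamma> u) (0 - \<gamma> u) + clarke_dd (J 0) 0 (\<gamma> u - 0)"
    by (rule add_mono)
  also have "\<dots> \<le> ereal (m_alpha * (norm (\<gamma> u - 0))\<^sup>2 + m_L * norm (\<gamma> u - 0) * norm (\<gamma> u - 0))"
    by (rule J3(3))
  finally have "A u u \<le> f u + K * norm (\<gamma> u) + (m_alpha + m_L) * (norm (\<gamma> u))\<^sup>2"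
    by (simp add: form.minus_right blinfun.bilinear_simps power2_eq_square algebra_simps)
  moreover have "f u \<le> norm f * r"
    using norm_blinfun[of f u] by (simp add: r_def abs_le_iff)
  moreover have "K * norm (\<gamma> u) \<le> K * (norm \<gamma> * r)"
    using \<gamma>u K(1) by (rule mult_left_mono)
  moreover have "(m_alpha + m_L) * (norm (\<gamma> u))\<^sup>2 \<le> (m_alpha + m_L) * (norm \<gamma> * r)\<^sup>2"
    using \<gamma>u J3(1,2) by (intro mult_left_mono power_mono) auto
  ultimately have "m_A * r\<^sup>2 \<le> norm f * r + K * (norm \<gamma> * r) + (m_alpha + m_L) * (norm \<gamma> * r)\<^sup>2"
    using A3[of u] unfolding r_def by linarith
  then have "r * ((m_A - (m_alpha + m_L) * (norm \<gamma>)\<^sup>2) * r) \<le> r * (norm f + K * norm \<gamma>)"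
    by (simp add: power2_eq_square algebra_simps)
  moreover have "0 \<le> norm f + K * norm \<gamma>" using K(1) by simp
  ultimately show ?thesis
    by (cases "r > 0") (auto simp: r_def)
qed

lemma problem_I_iff_hvi: "problem_I A f J \<gamma> u \<longleftrightarrow> hvi (\<gamma> u) u"
proof
  assume "problem_I A f J \<gamma> u"
  then obtain \<xi> where \<xi>: "\<xi> \<in> clarke_subdiff (J (\<gamma> u)) (\<gamma> u)" "A u + (\<xi> o\<^sub>L \<gamma>) = f"
    unfolding problem_I_def by blast
  have "f v - A u v = \<xi> (\<gamma> v)" for v
    unfolding \<xi>(2)[symmetric] by (simp add: plus_blinfun.rep_eq)
  with \<xi>(1) show "hvi (\<gamma> u) u" unfolding hvi_def clarke_subdiff_def by simp
next
  assume sol: "hvi (\<gamma> u) u"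
  define p where "p = clarke_der (J (\<gamma> u)) (\<gamma> u)"
  interpret sublinear p
    unfolding p_def using clarke_der_add_le[OF J1] clarke_der_scaleR[OF J1] by unfold_locales
  have dom: "f v - A u v \<le> p (\<gamma> v)" for v
    using sol unfolding hvi_def p_def by (simp add: clarke_dd_eq_ereal[OF J1])
  have lin: "linear (\<lambda>v. f v - A u v)" "linear (\<lambda>v. \<gamma> v)"
    by (intro bounded_linear.linear bounded_linear_sub blinfun.bounded_linear_right)+
  obtain \<xi> where \<xi>: "linear \<xi>" "\<And>x. \<xi> x \<le> p x" "\<And>v. \<xi> (\<gamma> v) = f v - A u v"
    by (rule hahn_banach_factor[OF lin(2) lin(1) dom]) blast
  obtain K where K: "\<And>z. \<bar>p z\<bar> \<le> K * norm z"
    unfolding p_def using clarke_der_abs_le[OF J1] by blast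
  have "norm (\<xi> z) \<le> norm z * K" for z
    using \<xi>(2)[of z] \<xi>(2)[of "- z"] K[of z] K[of "- z"] linear_neg[OF \<xi>(1), of z]
    by (simp add: abs_le_iff mult.commute)
  with \<xi>(1) have "bounded_linear \<xi>"
    unfolding bounded_linear_def bounded_linear_axioms_def by blast
  then have "Blinfun \<xi> \<in> clarke_subdiff (J (\<gamma> u)) (\<gamma> u)" "A u + (Blinfun \<xi> o\<^sub>L \<gamma>) = f"
    using \<xi>(2,3) by (auto simp: clarke_subdiff_def p_def clarke_dd_eq_ereal[OF J1]
        bounded_linear_Blinfun_apply plus_blinfun.rep_eq intro!: blinfun_eqI)
  then show "problem_I A f J \<gamma> u" unfolding problem_I_def by blast
qed

lemma problem_O_exists: "\<exists>u. problem_O A f J \<gamma> u"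
proof -
  define T where "T w = (SOME x. \<forall>y. L w x \<le> L w y)" for w
  have "\<exists>x. \<forall>y. L w x \<le> L w y" for w
    using lagr_has_min by blast
  then have T_min: "L w (T w) \<le> L w y" for w y
    unfolding T_def by (rule someI_ex[THEN spec])
  have T_hvi: "hvi (\<gamma> w) (T w)" for w
    by (rule zero_in_subdiff_lagr_imp_hvi[OF zero_in_clarke_subdiff_at_min[of "L w" "T w", OF T_min]])
  define k where "k = m_L * (norm \<gamma>)\<^sup>2 / (m_A - m_alpha * (norm \<gamma>)\<^sup>2)"
  have "m_L * (norm \<gamma>)\<^sup>2 < m_A - m_alpha * (norm \<gamma>)\<^sup>2"
    using S by (simp add: distrib_right)
  then have k: "0 \<le> k" "k < 1"
    unfolding k_def using m_A_minus_relaxation_pos J3(2) by (simp_all add: pos_divide_less_eq)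
  have "dist (T x) (T y) \<le> k * dist x y" for x y
  proof -
    have "(m_A - m_alpha * (norm \<gamma>)\<^sup>2) * norm (T x - T y) \<le> m_L * norm \<gamma> * norm (\<gamma> x - \<gamma> y)"
      by (rule hvi_estimate[OF T_hvi T_hvi])
    also have "\<dots> \<le> m_L * norm \<gamma> * (norm \<gamma> * norm (x - y))"
      using J3(2) by (intro mult_left_mono) (auto simp: norm_blinfun blinfun.diff_right[symmetric])
    also have "\<dots> = m_L * (norm \<gamma>)\<^sup>2 * norm (x - y)" by (simp add: power2_eq_square)
    finally have "norm (T x - T y) \<le> m_L * (norm \<gamma>)\<^sup>2 * norm (x - y) / (m_A - m_alpha * (norm \<gamma>)\<^sup>2)"
      using m_A_minus_relaxation_pos by (simp add: pos_le_divide_eq mult.commute)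
    then show ?thesis by (simp add: k_def dist_norm)
  qed
  then obtain u where "T u = u" using banach_fix_type[OF k] by blast
  then have "0 \<in> clarke_subdiff (L u) u"
    using zero_in_clarke_subdiff_at_min[of "L u" "T u", OF T_min] by simp
  then show ?thesis unfolding problem_O_def by blast
qed

lemma problem_I_O_unique_solution:
  obtains u0 where "\<And>u. problem_I A f J \<gamma> u \<longleftrightarrow> u = u0" "\<And>u. problem_O A f J \<gamma> u \<longleftrightarrow> u = u0"
proof -
  have O_hvi: "hvi (\<gamma> u) u" if "problem_O A f J \<gamma> u" for u
    using that unfolding problem_O_def by (rule zero_in_subdiff_lagr_imp_hvi)
  obtain u0 where u0: "problem_O A f J \<gamma> u0" using problem_O_exists by blast
  have "problem_I A f J \<gamma> u \<longleftrightarrow> u = u0" for u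
    using hvi_unique O_hvi[OF u0] problem_I_iff_hvi by blast
  moreover have "problem_O A f J \<gamma> u \<longleftrightarrow> u = u0" for u
    using hvi_unique O_hvi u0 by blast
  ultimately show ?thesis using that by blast
qed

lemma problem_I_norm_le:
  assumes "problem_I A f J \<gamma> u" and K: "K \<ge> 0" "\<And>z. - (K * norm z) \<le> clarke_der (J 0) 0 z"
  shows "norm u \<le> (1 + K * norm \<gamma>) / (m_A - (m_alpha + m_L) * (norm \<gamma>)\<^sup>2) * (1 + norm f)"
proof -
  have "(m_A - (m_alpha + m_L) * (norm \<gamma>)\<^sup>2) * norm u \<le> norm f + K * norm \<gamma>"
    using hvi_norm_le[OF assms(1)[unfolded problem_I_iff_hvi] K] .
  also have "\<dots> \<le> (1 + K * norm \<gamma>) * (1 + norm f)"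
    using K(1) by (simp add: algebra_simps)
  finally show ?thesis
    using S by (simp add: pos_le_divide_eq mult.commute)
qed

end

theorem theorem1:
  fixes A :: "'v::banach \<Rightarrow> ('v \<Rightarrow>\<^sub>L real)"
    and J :: "'x::banach \<Rightarrow> 'x \<Rightarrow> real"
    and \<gamma> :: "'v \<Rightarrow>\<^sub>L 'x"
    and m_A c0 c1 c2 m_alpha m_L :: real
  assumes refl: "reflexive_space TYPE('v)"
    and A1: "bounded_linear A"
    and A2: "\<And>u v. blinfun_apply (A u) v = blinfun_apply (A v) u"
    and A3: "m_A > 0" "\<And>u. blinfun_apply (A u) u \<ge> m_A * (norm u)\<^sup>2"
    and J1: "\<And>w. loc_lipschitz (J w)"
    and J2: "c0 \<ge> 0" "c1 \<ge> 0" "c2 \<ge> 0"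
      "\<And>w v \<xi>. \<xi> \<in> clarke_subdiff (J w) v \<Longrightarrow> norm \<xi> \<le> c0 + c1 * norm v + c2 * norm w"
    and J3: "m_alpha \<ge> 0" "m_L \<ge> 0"
      "\<And>w1 w2 v1 v2. clarke_dd (J w1) v1 (v2 - v1) + clarke_dd (J w2) v2 (v1 - v2)
          \<le> ereal (m_alpha * (norm (v1 - v2))\<^sup>2 + m_L * norm (w1 - w2) * norm (v1 - v2))"
    and S: "m_A > (m_alpha + m_L) * (norm \<gamma>)\<^sup>2"
  shows "\<exists>c>0. \<forall>f :: 'v \<Rightarrow>\<^sub>L real.
           (\<forall>u. problem_I A f J \<gamma> u \<longleftrightarrow> problem_O A f J \<gamma> u)
         \<and> (\<exists>!u. problem_I A f J \<gamma> u)
         \<and> (\<forall>u. problem_I A f J \<gamma> u \<longrightarrow> norm u \<le> c * (1 + norm f))"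
proof -
  obtain K where K: "K \<ge> 0" "\<And>z. \<bar>clarke_der (J 0) 0 z\<bar> \<le> K * norm z"
    using clarke_der_abs_le[OF J1] by blast
  have K_low: "- (K * norm z) \<le> clarke_der (J 0) 0 z" for z
    using K(2)[of z] by (simp add: abs_le_iff)
  define c where "c = (1 + K * norm \<gamma>) / (m_A - (m_alpha + m_L) * (norm \<gamma>)\<^sup>2)"
  have "c > 0" using K(1) S by (simp add: c_def add_pos_nonneg)
  moreover have "(\<forall>u. problem_I A f J \<gamma> u \<longleftrightarrow> problem_O A f J \<gamma> u)
         \<and> (\<exists>!u. problem_I A f J \<gamma> u)
         \<and> (\<forall>u. problem_I A f J \<gamma> u \<longrightarrow> norm u \<le> c * (1 + norm f))" for f
  proof -
    interpret hemivariational A J \<gamma> m_A m_alpha m_L f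
      by (rule hemivariational.intro[OF A1 A2 A3(2) J1 J3 S])
    obtain u0 where "\<And>u. problem_I A f J \<gamma> u \<longleftrightarrow> u = u0" "\<And>u. problem_O A f J \<gamma> u \<longleftrightarrow> u = u0"
      by (rule problem_I_O_unique_solution) blast
    then show ?thesis
      using problem_I_norm_le[OF _ K(1) K_low] unfolding c_def by auto
  qed
  ultimately show ?thesis by blast
qed

end
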